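(* Let $n\ge 2$, $\lambda\in[0,(n-1)^2/4]$, and let $h$, $d_0$ be as follows: $h:(0,\infty)\to\mathbb{R}$ solves $h''+(n-1)\tanh(d)h'=-\lambda h$, is positive and decreasing on $[d_0,\infty)$, and satisfies $h(d)<C_3e^{-rd}$ for $d>d_0$, where $r=\frac{n-1}{2}+\frac{n-1}{2}\sqrt{1-4\lambda/(n-1)^2}$. In the Poincaré ball model $B$, for $z\in\partial B$ and $\theta>0$ let $I=I(z,\theta,0)$ be the totally geodesic hyperball whose closure meets $\partial B$ exactly in the closed cap $\{y\in\partial B:\angle(y,z)\le\theta/2\}$, and let $w_I(x)=h(\sigma(x))/h(d_0)$, where $\sigma(x)$ is the hyperbolic distance from $x$ to $\partial I$ taken with positive sign on the side of $\partial I$ containing $0$. Then there exist constants $C_4>0$ and $\theta_1>0$ (independent of $z$) such that $$0<w_I(0)\le C_4\,\theta^{(n-1)/2}\quad\text{for all }0<\theta<\theta_1.$$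
   Context: The Poincaré ball model is $B=\{p\in\mathbb{R}^n:|p|<1\}$ with metric $\frac{4}{(1-|p|^2)^2}\delta_{ij}$ and ideal boundary $\partial B$; totally geodesic hyperballs are regions bounded by totally geodesic hyperspheres (Euclidean spheres orthogonal to $\partial B$ intersected with $B$). The function $x\mapsto h(\sigma(x))$ satisfies $-\Delta u=\lambda u$ where $\sigma$ ranges in $(0,\infty)$. *)

theory Defs
  imports "HOL-Analysis.Analysis"
begin

definition pball :: "('a::euclidean_space) set" where
  "pball = ball 0 1"

definition pbdry :: "('a::euclidean_space) set" where
  "pbdry = sphere 0 1"

text \<open>Hyperbolic distance of the metric 4/(1-|p|^2)^2 delta_ij.\<close>
definition hdist :: "'a::euclidean_space \<Rightarrow> 'a \<Rightarrow> real" where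
  "hdist x y = arcosh (1 + 2 * (norm (x - y))\<^sup>2 / ((1 - (norm x)\<^sup>2) * (1 - (norm y)\<^sup>2)))"

definition eangle :: "'a::euclidean_space \<Rightarrow> 'a \<Rightarrow> real" where
  "eangle y z = arccos ((y \<bullet> z) / (norm y * norm z))"

text \<open>Totally geodesic hyperballs: regions of B bounded by a Euclidean sphere
  S(c,rho) orthogonal to the unit sphere (|c|^2 = 1 + rho^2), i.e. one of the two
  sides of the totally geodesic hypersphere S(c,rho) \<inter> B.\<close>
definition tg_hyperball :: "'a::euclidean_space set \<Rightarrow> bool" where
  "tg_hyperball I \<longleftrightarrow> (\<exists>c rho. rho > 0 \<and> (norm c)\<^sup>2 = 1 + rho\<^sup>2 \<and>
      (I = {x \<in> pball. dist x c < rho} \<or> I = {x \<in> pball. dist x c > rho}))"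

definition cap :: "'a::euclidean_space \<Rightarrow> real \<Rightarrow> 'a set" where
  "cap z \<theta> = {y \<in> pbdry. eangle y z \<le> \<theta> / 2}"

definition is_I :: "'a::euclidean_space set \<Rightarrow> 'a \<Rightarrow> real \<Rightarrow> bool" where
  "is_I I z \<theta> \<longleftrightarrow> tg_hyperball I \<and> closure I \<inter> pbdry = cap z \<theta>"

definition hbdry :: "'a::euclidean_space set \<Rightarrow> 'a set" where
  "hbdry I = frontier I \<inter> pball"

definition sigma :: "'a::euclidean_space set \<Rightarrow> 'a \<Rightarrow> real" where
  "sigma I x = (if (x \<in> I \<longleftrightarrow> 0 \<in> I) then 1 else -1) * (INF y\<in>hbdry I. hdist x y)"

definition wI :: "(real \<Rightarrow> real) \<Rightarrow> real \<Rightarrow> 'a::euclidean_space set \<Rightarrow> 'a \<Rightarrow> real" where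
  "wI h d0 I x = h (sigma I x) / h d0"

end

theory Submission
  imports Defs
begin

text \<open>For small \<open>\<theta>\<close> the hyperball \<open>I\<close> must be the inner side of a sphere \<open>S(c,\<rho>)\<close>
  orthogonal to the unit sphere, and since its ideal boundary lies in a cap of angular radius
  \<open>\<theta>/2\<close>, the Euclidean radius satisfies \<open>\<rho> \<le> \<theta>\<close>. Hence \<open>\<partial>I\<close> keeps Euclidean distance
  at least \<open>1 - \<theta>\<close> from the origin, i.e. hyperbolic distance at least \<open>-ln (2\<theta>)\<close>. As \<open>h\<close>
  decreases and decays at a rate \<open>r \<ge> (n-1)/2\<close>, this gives
  \<open>h(\<sigma>(0)) \<le> C\<^sub>3 (2\<theta>)\<^bsup>(n-1)/2\<^esup>\<close>.\<close>

lemma exists_unit_orthogonal_inner_nonpos: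
  fixes u a :: "'a::euclidean_space"
  assumes "2 \<le> DIM('a)"
  obtains v where "norm v = 1" "v \<bullet> u = 0" "v \<bullet> a \<le> 0"
proof -
  obtain y where "y \<noteq> 0" "orthogonal u y" using orthogonal_to_vector_exists[OF assms] by blast
  then have "norm (y /\<^sub>R norm y) = 1" "(y /\<^sub>R norm y) \<bullet> u = 0"
    by (auto simp: orthogonal_def inner_commute)
  then show ?thesis
    using that[of "y /\<^sub>R norm y"] that[of "- (y /\<^sub>R norm y)"]
    by (cases "(y /\<^sub>R norm y) \<bullet> a \<le> 0") auto
qed

lemma closure_pball_Int_open:
  fixes y :: "'a::euclidean_space"
  assumes "open U" "y \<in> U" "norm y \<le> 1"
  shows "y \<in> closure (pball \<inter> U)"
proof -
  have "y \<in> U \<inter> closure pball" using assms by (simp add: pball_def)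
  then show ?thesis using open_Int_closure_subset[OF \<open>open U\<close>] by (auto simp: Int_commute)
qed

lemma dist_sq_orthogonal_sphere:
  fixes y c :: "'a::euclidean_space"
  assumes "norm y = 1" "(norm c)\<^sup>2 = 1 + \<rho>\<^sup>2"
  shows "(dist y c)\<^sup>2 = \<rho>\<^sup>2 + 2 * (1 - y \<bullet> c)"
proof -
  have "y \<bullet> y = 1" using assms(1) by (metis power2_norm_eq_inner power_one)
  then show ?thesis
    using assms(2) by (simp add: dist_norm power2_norm_eq_inner inner_diff_left inner_diff_right
        inner_commute[of c y] algebra_simps)
qed

lemma one_minus_cos_le: "1 - cos (x::real) \<le> x\<^sup>2 / 2"
proof -
  have "\<bar>sin (x/2)\<bar> \<le> \<bar>x/2\<bar>" by (rule abs_sin_x_le_abs_x)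
  then have "(sin (x/2))\<^sup>2 \<le> (x/2)\<^sup>2" by (metis power2_abs power_mono abs_ge_zero)
  then show ?thesis using cos_double_sin[of "x/2"] by (simp add: power_divide)
qed

lemma cap_inner_ge:
  fixes y z :: "'a::euclidean_space"
  assumes "y \<in> cap z \<theta>" "norm z = 1" "0 \<le> \<theta>" "\<theta> \<le> 2 * pi"
  shows "cos (\<theta>/2) \<le> y \<bullet> z"
proof -
  have ny: "norm y = 1" using assms(1) by (simp add: cap_def pbdry_def)
  then have b: "\<bar>y \<bullet> z\<bar> \<le> 1" using Cauchy_Schwarz_ineq2[of y z] assms(2) by simp
  have "arccos (y \<bullet> z) \<le> \<theta>/2" using assms(1,2) ny by (simp add: cap_def eangle_def)
  then have "cos (\<theta>/2) \<le> cos (arccos (y \<bullet> z))"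
    using b assms(3,4) arccos_lbound[of "y \<bullet> z"] arccos_ubound[of "y \<bullet> z"]
    by (subst cos_mono_le_eq) auto
  then show ?thesis using b by simp
qed

lemma sphere_point_in_closure_tg_inside:
  fixes y c :: "'a::euclidean_space"
  assumes "norm y = 1" "(norm c)\<^sup>2 = 1 + \<rho>\<^sup>2" "0 < \<rho>" "1 < y \<bullet> c"
  shows "y \<in> closure {x \<in> pball. dist x c < \<rho>}"
proof -
  have "(dist y c)\<^sup>2 < \<rho>\<^sup>2" using dist_sq_orthogonal_sphere[OF assms(1,2)] assms(4) by simp
  then have "y \<in> ball c \<rho>" using assms(3) by (simp add: dist_commute power_less_imp_less_base)
  moreover have "{x \<in> pball. dist x c < \<rho>} = pball \<inter> ball c \<rho>" by (auto simp: dist_commute)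
  ultimately show ?thesis using closure_pball_Int_open[of "ball c \<rho>" y] assms(1) by simp
qed

lemma sphere_point_in_closure_tg_outside:
  fixes y c :: "'a::euclidean_space"
  assumes "norm y = 1" "(norm c)\<^sup>2 = 1 + \<rho>\<^sup>2" "0 < \<rho>" "y \<bullet> c < 1"
  shows "y \<in> closure {x \<in> pball. \<rho> < dist x c}"
proof -
  have "\<rho>\<^sup>2 < (dist y c)\<^sup>2" using dist_sq_orthogonal_sphere[OF assms(1,2)] assms(4) by simp
  then have "\<rho> < dist y c" using power_less_imp_less_base[of \<rho> 2 "dist y c"] by simp
  then have "y \<in> - cball c \<rho>" by (simp add: dist_commute)
  moreover have "{x \<in> pball. \<rho> < dist x c} = pball \<inter> - cball c \<rho>" by (auto simp: dist_commute)
  ultimately show ?thesis using closure_pball_Int_open[of "- cball c \<rho>" y] assms(1)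
    by (simp add: open_Compl)
qed

lemma radius_le_of_inverse_center_norm:
  fixes k \<rho> \<theta> :: real
  assumes "1 < k" "k\<^sup>2 = 1 + \<rho>\<^sup>2" "1 - 1/k \<le> \<theta>\<^sup>2 / 4" "0 < \<theta>" "\<theta> \<le> 1/2"
  shows "\<rho> \<le> \<theta>"
proof -
  have "\<theta>\<^sup>2 \<le> 1/4" using assms(4,5) power_mono[of \<theta> "1/2" 2] by (simp add: power_divide)
  then have "15/16 \<le> 1/k" using assms(3) by linarith
  then have k: "k \<le> 16/15" using assms(1) by (simp add: field_simps)
  have "k - 1 = k * (1 - 1/k)" using assms(1) by (simp add: field_simps)
  also have "\<dots> \<le> 16/15 * (\<theta>\<^sup>2 / 4)" using assms(1,3) k by (intro mult_mono) auto
  finally have km1: "k - 1 \<le> 16/15 * (\<theta>\<^sup>2 / 4)" .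
  have "\<rho>\<^sup>2 = (k - 1) * (k + 1)" using assms(2) by (simp add: power2_eq_square algebra_simps)
  also have "\<dots> \<le> (16/15 * (\<theta>\<^sup>2 / 4)) * (k + 1)" using km1 assms(1) by (intro mult_right_mono) auto
  also have "\<dots> \<le> (16/15 * (\<theta>\<^sup>2 / 4)) * (31/15)" using k by (intro mult_left_mono) auto
  also have "\<dots> \<le> \<theta>\<^sup>2" by (simp add: algebra_simps)
  finally show ?thesis using assms(4) by (rule power2_le_imp_le[OF _ less_imp_le])
qed

lemma norm_orthonormal_combination:
  fixes u v :: "'a::real_inner"
  assumes "norm u = 1" "norm v = 1" "v \<bullet> u = 0" "\<bar>s\<bar> \<le> 1"
  shows "norm (s *\<^sub>R u + sqrt (1 - s\<^sup>2) *\<^sub>R v) = 1"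
proof -
  have "u \<bullet> u = 1" "v \<bullet> v = 1" using assms(1,2) by (metis power2_norm_eq_inner power_one)+
  moreover have "sqrt (1 - s\<^sup>2) * sqrt (1 - s\<^sup>2) = 1 - s\<^sup>2"
    using assms(4) abs_square_le_1[of s] by simp
  ultimately have "(s *\<^sub>R u + sqrt (1 - s\<^sup>2) *\<^sub>R v) \<bullet> (s *\<^sub>R u + sqrt (1 - s\<^sup>2) *\<^sub>R v) = 1"
    using assms(3) by (simp add: inner_add_left inner_add_right inner_commute[of u v] power2_eq_square)
  then show ?thesis by (simp add: norm_eq_sqrt_inner)
qed

lemma is_I_small_tg_ball:
  fixes I :: "'a::euclidean_space set"
  assumes dim: "2 \<le> DIM('a)" and z: "z \<in> pbdry" and \<theta>: "0 < \<theta>" "\<theta> \<le> 1/2"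
    and I: "is_I I z \<theta>"
  obtains c \<rho> where "I = {x \<in> pball. dist x c < \<rho>}" "(norm c)\<^sup>2 = 1 + \<rho>\<^sup>2" "0 < \<rho>" "\<rho> \<le> \<theta>"
proof -
  have nz: "norm z = 1" using z by (simp add: pbdry_def)
  obtain c \<rho> where \<rho>: "0 < \<rho>" and c: "(norm c)\<^sup>2 = 1 + \<rho>\<^sup>2"
    and I_cases: "I = {x \<in> pball. dist x c < \<rho>} \<or> I = {x \<in> pball. \<rho> < dist x c}"
    using I by (auto simp: is_I_def tg_hyperball_def)
  have cap_bound: "cos (\<theta>/2) \<le> y \<bullet> z" if "y \<in> closure I" "norm y = 1" for y
  proof -
    have "y \<in> closure I \<inter> pbdry" using that by (simp add: pbdry_def)
    then have "y \<in> cap z \<theta>" using I unfolding is_I_def by blast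
    then show ?thesis using cap_inner_ge nz \<theta> pi_gt3 by force
  qed
  have cos_pos: "0 < cos (\<theta>/2)" using \<theta> pi_gt3 by (intro cos_gt_zero) auto
  have I_inside: "I = {x \<in> pball. dist x c < \<rho>}"
  proof (rule ccontr)
    txt \<open>Otherwise the ideal boundary would contain a point orthogonal to \<open>z\<close>.\<close>
    assume "I \<noteq> {x \<in> pball. dist x c < \<rho>}"
    then have I_outside: "I = {x \<in> pball. \<rho> < dist x c}" using I_cases by blast
    obtain v where v: "norm v = 1" "v \<bullet> z = 0" "v \<bullet> c \<le> 0"
      using exists_unit_orthogonal_inner_nonpos[OF dim] by blast
    then have "v \<in> closure I"
      using sphere_point_in_closure_tg_outside[OF v(1) c \<rho>] I_outside by simp
    then show False using cap_bound v cos_pos by fastforce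
  qed
  define k where "k = norm c"
  have "1\<^sup>2 < k\<^sup>2" using c \<rho> by (simp add: k_def)
  then have k: "1 < k" using power_less_imp_less_base[of 1 2 k] by (simp add: k_def)
  define u where "u = c /\<^sub>R k"
  have c_eq: "c = k *\<^sub>R u" and nu: "norm u = 1" using k by (auto simp: u_def k_def field_simps)
  obtain v where v: "norm v = 1" "v \<bullet> u = 0" "v \<bullet> z \<le> 0"
    using exists_unit_orthogonal_inner_nonpos[OF dim] by blast
  txt \<open>\<open>s\<close> lies between \<open>1/k\<close>, the cosine of the angular radius of the ideal boundary
    of \<open>I\<close>, and \<open>1\<close>; so \<open>y\<close> is on that boundary, while \<open>v\<close> tilts it away from \<open>z\<close>.\<close>
  define s where "s = (1 + 1/k) / 2"
  have s: "0 < s" "s < 1" "1 < s * k" using k by (auto simp: s_def field_simps)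
  define y where "y = s *\<^sub>R u + sqrt (1 - s\<^sup>2) *\<^sub>R v"
  have ny: "norm y = 1" unfolding y_def using s by (intro norm_orthonormal_combination nu v) auto
  have "u \<bullet> u = 1" using nu by (metis power2_norm_eq_inner power_one)
  then have "y \<bullet> c = s * k" using v by (simp add: y_def c_eq inner_add_left inner_commute[of v u])
  then have "y \<in> closure I"
    using sphere_point_in_closure_tg_inside[OF ny c \<rho>] s I_inside by simp
  then have "cos (\<theta>/2) \<le> y \<bullet> z" using cap_bound ny by blast
  also have "\<dots> \<le> s * (u \<bullet> z)"
    using v s abs_square_le_1[of s] mult_nonneg_nonpos[of "sqrt (1 - s\<^sup>2)" "v \<bullet> z"]
    by (simp add: y_def inner_add_left)
  also have "\<dots> \<le> s" using s Cauchy_Schwarz_ineq2[of u z] nu nz by simp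
  finally have "1 - s \<le> (\<theta>/2)\<^sup>2 / 2" using one_minus_cos_le[of "\<theta>/2"] by linarith
  then have "1 - 1/k \<le> \<theta>\<^sup>2 / 4" by (simp add: s_def power_divide field_simps)
  then have "\<rho> \<le> \<theta>" using radius_le_of_inverse_center_norm[OF k _ _ \<theta>] c by (simp add: k_def)
  then show ?thesis using that I_inside c \<rho> by blast
qed

lemma hdist_origin_ge:
  fixes y :: "'a::euclidean_space"
  assumes "norm y < 1"
  shows "- ln (2 * (1 - norm y)) \<le> hdist 0 y"
proof -
  define s where "s = norm y"
  have s: "0 \<le> s" "s < 1" using assms by (auto simp: s_def)
  then have s2: "s\<^sup>2 < 1" by (simp add: abs_square_less_1)
  define X where "X = 1 + 2 * s\<^sup>2 / (1 - s\<^sup>2)"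
  have X1: "1 \<le> X" using s2 by (simp add: X_def)
  have "1 / (2 * (1 - s)) \<le> 1 / (1 - s\<^sup>2)"
  proof (rule divide_left_mono)
    have "1 - s\<^sup>2 = (1 - s) * (1 + s)" by (simp add: power2_eq_square algebra_simps)
    also have "\<dots> \<le> (1 - s) * 2" using s by (intro mult_left_mono) auto
    finally show "1 - s\<^sup>2 \<le> 2 * (1 - s)" by simp
  qed (use s s2 in auto)
  also have "\<dots> \<le> (1 + s\<^sup>2) / (1 - s\<^sup>2)" using s2 by (intro divide_right_mono) auto
  also have "\<dots> = X" using s2 by (simp add: X_def field_simps)
  finally have X_ge: "1 / (2 * (1 - s)) \<le> X" .
  have "- ln (2 * (1 - s)) = ln (1 / (2 * (1 - s)))" using s by (simp add: ln_div)
  also have "\<dots> \<le> ln X" using X_ge X1 s by (subst ln_le_cancel_iff) auto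
  also have "\<dots> \<le> ln (X + sqrt (X\<^sup>2 - 1))" using X1 by (subst ln_le_cancel_iff) (auto intro: add_pos_nonneg)
  also have "\<dots> = hdist 0 y" using X1 by (simp add: hdist_def X_def s_def arcosh_real_def)
  finally show ?thesis by (simp add: s_def)
qed

lemma hbdry_tg_ball:
  fixes c :: "'a::euclidean_space"
  assumes c: "(norm c)\<^sup>2 = 1 + \<rho>\<^sup>2" and \<rho>: "0 < \<rho>"
  shows "hbdry {x \<in> pball. dist x c < \<rho>} \<noteq> {}"
    and "y \<in> hbdry {x \<in> pball. dist x c < \<rho>} \<Longrightarrow> 1 - \<rho> \<le> norm y"
proof -
  define I where "I = {x \<in> pball :: 'a set. dist x c < \<rho>}"
  have "1\<^sup>2 < (norm c)\<^sup>2" "\<rho>\<^sup>2 < (norm c)\<^sup>2" using c \<rho> by simp_all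
  then have nc: "1 < norm c" "\<rho> < norm c" using power_less_imp_less_base by fastforce+
  define u where "u = c /\<^sub>R norm c"
  have "norm u = 1" "u \<bullet> c = norm c"
    using nc by (auto simp: u_def power2_norm_eq_inner[symmetric] power2_eq_square field_simps)
  then have "u \<in> closure I" using sphere_point_in_closure_tg_inside[OF _ c \<rho>] nc by (simp add: I_def)
  then have "I \<noteq> {}" by auto
  moreover have "0 \<in> pball - I" using c \<rho> nc by (auto simp: I_def pball_def)
  moreover have "connected (pball :: 'a set)" by (simp add: pball_def)
  moreover have "I \<subseteq> pball" by (auto simp: I_def)
  ultimately have "pball \<inter> frontier I \<noteq> {}"
    using connected_Int_frontier[of pball I] by blast
  then show "hbdry {x \<in> pball. dist x c < \<rho>} \<noteq> {}" by (simp add: hbdry_def I_def Int_commute)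
  assume "y \<in> hbdry {x \<in> pball. dist x c < \<rho>}"
  then have "y \<in> closure I" by (simp add: hbdry_def frontier_def I_def)
  moreover have "closure I \<subseteq> cball c \<rho>"
    by (rule closure_minimal) (auto simp: I_def dist_commute)
  ultimately have "dist c y \<le> \<rho>" by auto
  then show "1 - \<rho> \<le> norm y" using nc norm_triangle_sub[of c y] by (simp add: dist_norm)
qed

lemma sigma_origin_ge:
  fixes I :: "'a::euclidean_space set"
  assumes "2 \<le> DIM('a)" "z \<in> pbdry" "0 < \<theta>" "\<theta> \<le> 1/2" "is_I I z \<theta>"
  shows "- ln (2 * \<theta>) \<le> sigma I 0"
proof -
  obtain c \<rho> where I: "I = {x \<in> pball. dist x c < \<rho>}" and c: "(norm c)\<^sup>2 = 1 + \<rho>\<^sup>2"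
    and \<rho>: "0 < \<rho>" "\<rho> \<le> \<theta>"
    using is_I_small_tg_ball[OF assms] .
  have "- ln (2 * \<theta>) \<le> hdist 0 y" if y: "y \<in> hbdry I" for y
  proof -
    have "norm y < 1" using y by (simp add: hbdry_def pball_def)
    moreover have "1 - norm y \<le> \<theta>" using hbdry_tg_ball(2)[OF c \<rho>(1)] y \<rho>(2) I by fastforce
    ultimately have "- ln (2 * \<theta>) \<le> - ln (2 * (1 - norm y))" by simp
    then show ?thesis using hdist_origin_ge[OF \<open>norm y < 1\<close>] by linarith
  qed
  then show ?thesis
    using hbdry_tg_ball(1)[OF c \<rho>(1)] I by (simp add: sigma_def cINF_greatest)
qed

lemma decreasing_exp_decay_bound:
  fixes h :: "real \<Rightarrow> real"
  assumes pos: "\<And>d. a \<le> d \<Longrightarrow> 0 < h d"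
    and decr: "\<And>d e. a \<le> d \<Longrightarrow> d \<le> e \<Longrightarrow> h e \<le> h d"
    and decay: "\<And>d. a < d \<Longrightarrow> h d < C * exp (- r * d)"
    and "m \<le> r" "0 \<le> a" "a < D" "D \<le> \<sigma>"
  shows "0 < h \<sigma>" "h \<sigma> \<le> C * exp (- m * D)"
proof -
  show "0 < h \<sigma>" using pos assms(5-7) by simp
  have "0 < C * exp (- r * D)" using pos[of D] decay[of D] assms(6) by simp
  then have "0 < C" by (simp add: zero_less_mult_iff)
  have "h \<sigma> \<le> h D" using decr assms(6,7) by simp
  also have "\<dots> < C * exp (- r * D)" using decay assms(6) by simp
  also have "\<dots> \<le> C * exp (- m * D)" using \<open>0 < C\<close> assms(4-6) by (simp add: mult_right_mono)
  finally show "h \<sigma> \<le> C * exp (- m * D)" by simp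
qed

theorem mainTheorem6:
  fixes h h' :: "real \<Rightarrow> real" and lam d0 C3 :: real
  assumes n2: "CARD('n::finite) \<ge> 2"
    and hlam: "0 \<le> lam" "lam \<le> (real CARD('n) - 1)\<^sup>2 / 4"
    and d0: "d0 > 0"
    and deriv1: "\<And>d. d > 0 \<Longrightarrow> (h has_real_derivative h' d) (at d)"
    and ode: "\<And>d. d > 0 \<Longrightarrow>
       (h' has_real_derivative (- lam * h d - (real CARD('n) - 1) * tanh d * h' d)) (at d)"
    and pos: "\<And>d. d \<ge> d0 \<Longrightarrow> h d > 0"
    and decr: "\<And>d e. d0 \<le> d \<Longrightarrow> d \<le> e \<Longrightarrow> h e \<le> h d"
    and decay: "\<And>d. d > d0 \<Longrightarrow> h d < C3 * exp (- ((real CARD('n) - 1) / 2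
        + (real CARD('n) - 1) / 2 * sqrt (1 - 4 * lam / (real CARD('n) - 1)\<^sup>2)) * d)"
  shows "\<exists>C4 > 0. \<exists>\<theta>1 > 0. \<forall>(z :: real^'n) \<theta> I. z \<in> pbdry \<longrightarrow> 0 < \<theta> \<longrightarrow> \<theta> < \<theta>1 \<longrightarrow>
           is_I I z \<theta> \<longrightarrow> 0 < wI h d0 I 0 \<and> wI h d0 I 0 \<le> C4 * \<theta> powr ((real CARD('n) - 1) / 2)"
proof -
  define m where "m = (real CARD('n) - 1) / 2"
  define r where "r = (real CARD('n) - 1) / 2
      + (real CARD('n) - 1) / 2 * sqrt (1 - 4 * lam / (real CARD('n) - 1)\<^sup>2)"
  have decay_r: "\<And>d. d0 < d \<Longrightarrow> h d < C3 * exp (- r * d)" using decay by (simp add: r_def)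
  have "4 * lam / (real CARD('n) - 1)\<^sup>2 \<le> 1" using n2 hlam(2) by (simp add: divide_le_eq)
  then have "m \<le> r" using n2 by (simp add: m_def r_def)
  have hd0: "0 < h d0" using pos by simp
  have "0 < C3 * exp (- r * (d0 + 1))" using pos[of "d0 + 1"] decay_r[of "d0 + 1"] by simp
  then have "0 < C3" by (simp add: zero_less_mult_iff)
  define C4 where "C4 = C3 * 2 powr m / h d0"
  define \<theta>1 where "\<theta>1 = min (1/2) (exp (- d0) / 2)"
  have "0 < wI h d0 I 0 \<and> wI h d0 I 0 \<le> C4 * \<theta> powr m"
    if "z \<in> pbdry" "0 < \<theta>" "\<theta> < \<theta>1" "is_I I z \<theta>" for z :: "real^'n" and \<theta> I
  proof -
    have \<sigma>: "- ln (2 * \<theta>) \<le> sigma I 0"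
      using that n2 by (intro sigma_origin_ge[of z]) (auto simp: \<theta>1_def)
    have D: "d0 < - ln (2 * \<theta>)"
      using that(2,3) ln_less_cancel_iff[of "2 * \<theta>" "exp (- d0)"] by (simp add: \<theta>1_def)
    have "0 < h (sigma I 0)" "h (sigma I 0) \<le> C3 * exp (- m * - ln (2 * \<theta>))"
      using decreasing_exp_decay_bound[where a = d0, OF pos decr decay_r \<open>m \<le> r\<close> _ D \<sigma>] d0
      by simp_all
    moreover have "exp (- m * - ln (2 * \<theta>)) = (2 * \<theta>) powr m"
      using that(2) by (simp add: powr_def mult.commute)
    moreover have "(2 * \<theta>) powr m = 2 powr m * \<theta> powr m" using that(2) by (simp add: powr_mult)
    ultimately show ?thesis using hd0 \<open>0 < C3\<close>
      by (simp add: wI_def C4_def divide_right_mono mult.assoc)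
  qed
  moreover have "0 < C4" "0 < \<theta>1" using hd0 \<open>0 < C3\<close> by (simp_all add: C4_def \<theta>1_def)
  ultimately show ?thesis unfolding m_def by blast
qed

end
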